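(* For the Rogers--Szeg\H{o} polynomials, we have \[ \mu_{n,m} = \begin{bmatrix} n \\ m \end{bmatrix}_q q^{\frac{(n-m)^2}{2}}, \] where \( \begin{bmatrix} n \\ m \end{bmatrix}_q \) is the \( q \)-binomial coefficient given by \( \begin{bmatrix} n \\ m \end{bmatrix}_q =\frac{(1-q^n)(1-q^{n-1})\cdots(1-q^{n-m+1})}{(1-q^m)(1-q^{m-1})\cdots(1-q)} \).
   Context: Let \( (\Phi_n(z))_{n\ge0} \) be monic orthogonal polynomials on the unit circle (OPUC) with \( \deg\Phi_n=n \), \( \Phi_0=1 \), satisfying Szeg\H{o}'s recurrence \( \Phi_{n+1}(z) = z\Phi_n(z) - \overline{\alpha_n}\Phi_n^*(z) \), where \( \Phi_n^*(z)=z^n\overline{\Phi_n}(1/z) \) is the reverse polynomial and \( (\alpha_n)_{n\ge0} \) are the Verblunsky coefficients with \( |\alpha_n|<1 \). They are orthogonal with respect to the linear functional \( \mathcal{L} \) on Laurent polynomials with \( \mathcal{L}(1)=1 \) and \( \mathcal{L}(\Phi_m(z)\overline{\Phi_n}(1/z))=\kappa_n\delta_{m,n} \), \( \kappa_n>0 \). Define the inner product \( \langle f(z),g(z)\rangle=\mathcal{L}(f(z)\overline{g}(1/z)) \), the generalized moment \( \mu_{n,r,s}=\langle \Phi_s(z),z^n\Phi_r(z)\rangle/\langle\Phi_s(z),\Phi_s(z)\rangle \), and \( \mu_{n,m}=\mu_{n,0,m} \). For \( q\in(0,1) \), the Rogers--Szeg\H{o} polynomials are the OPUC with Verblunsky coefficients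 \( \alpha_n=(-1)^nq^{(n+1)/2} \), \( n\ge0 \). *)

theory Defs
  imports "HOL-Analysis.Analysis" "HOL-Computational_Algebra.Polynomial"
begin

text \<open>Reverse polynomial of a polynomial of (formal) degree n:
  p^*(z) = z^n conj(p)(1/z), i.e. coefficient k is conj(coeff p (n-k)) for k \<le> n.\<close>
definition reverse_poly :: "nat \<Rightarrow> complex poly \<Rightarrow> complex poly" where
  "reverse_poly n p = (\<Sum>k\<le>n. monom (cnj (coeff p (n - k))) k)"

text \<open>Monic OPUC from Verblunsky coefficients via Szego's recurrence.\<close>
fun opuc :: "(nat \<Rightarrow> complex) \<Rightarrow> nat \<Rightarrow> complex poly" where
  "opuc \<alpha> 0 = 1"
| "opuc \<alpha> (Suc n) = [:0, 1:] * opuc \<alpha> n - smult (cnj (\<alpha> n)) (reverse_poly n (opuc \<alpha> n))"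

text \<open>A linear functional L on Laurent polynomials is determined by its moments
  c k = L(z^k), k \<in> \<int>.  The inner product <f,g> = L(f(z) conj(g)(1/z)) written out.\<close>
definition lp_inner :: "(int \<Rightarrow> complex) \<Rightarrow> complex poly \<Rightarrow> complex poly \<Rightarrow> complex" where
  "lp_inner c f g = (\<Sum>i\<le>degree f. \<Sum>j\<le>degree g.
      coeff f i * cnj (coeff g j) * c (int i - int j))"

definition gen_moment :: "(int \<Rightarrow> complex) \<Rightarrow> (nat \<Rightarrow> complex) \<Rightarrow> nat \<Rightarrow> nat \<Rightarrow> nat \<Rightarrow> complex" where
  "gen_moment c \<alpha> n r s =
     lp_inner c (opuc \<alpha> s) (monom 1 n * opuc \<alpha> r) / lp_inner c (opuc \<alpha> s) (opuc \<alpha> s)"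

text \<open>Verblunsky coefficients of the Rogers--Szego polynomials.\<close>
definition rs_alpha :: "real \<Rightarrow> nat \<Rightarrow> complex" where
  "rs_alpha q n = complex_of_real ((-1) ^ n * q powr ((real n + 1) / 2))"

definition q_binom :: "real \<Rightarrow> nat \<Rightarrow> nat \<Rightarrow> real" where
  "q_binom q n m = (\<Prod>i<m. 1 - q ^ (n - i)) / (\<Prod>i<m. 1 - q ^ (i + 1))"

end

theory Submission
  imports Defs
begin

(* With s = sqrt q the Verblunsky coefficients are alpha_n = -(-s)^(n+1), and Szego's recurrence
   together with the q-Pascal rule gives Phi_m(z) = sum_k [m,k]_q (-s)^(m-k) z^k.  This triangular
   matrix has the inverse ([n,m]_q s^((n-m)^2)): after q-trinomial revision the off-diagonal
   entries reduce to sum_j [N,j]_q (-1)^j q^(j choose 2) = 0 for N > 0, which is Cauchy's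
   q-binomial theorem prod_(i<N) (1 - q^i x) at x = 1.  Hence z^n = sum_j [n,j]_q s^((n-j)^2) Phi_j,
   and orthogonality extracts the coefficient of Phi_m as mu_(n,m). *)

lemma q_binom_0_right [simp]: "q_binom q n 0 = 1"
  by (simp add: q_binom_def)

lemma q_binom_eq_0: "n < k \<Longrightarrow> q_binom q n k = 0"
proof -
  assume "n < k"
  then have "(\<Prod>i<k. 1 - q ^ (n - i)) = 0"
    by (intro prod_zero) (auto intro!: bexI[of _ n])
  then show ?thesis
    by (simp add: q_binom_def)
qed

lemma q_binom_Suc_right:
  assumes "0 < q" "q < 1"
  shows "(1 - q ^ Suc k) * q_binom q n (Suc k) = (1 - q ^ (n - k)) * q_binom q n k"
  using power_Suc_less_one[OF assms, of k] by (simp add: q_binom_def)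

lemma q_binom_Suc_Suc:
  assumes "0 < q" "q < 1"
  shows "(1 - q ^ Suc k) * q_binom q (Suc n) (Suc k) = (1 - q ^ Suc n) * q_binom q n k"
proof -
  have "(\<Prod>i<Suc k. 1 - q ^ (Suc n - i)) = (1 - q ^ Suc n) * (\<Prod>i<k. 1 - q ^ (n - i))"
    by (subst prod.lessThan_Suc_shift) simp
  then show ?thesis
    using power_Suc_less_one[OF assms, of k] by (simp add: q_binom_def)
qed

lemma q_binom_pascal:
  assumes "0 < q" "q < 1"
  shows "q_binom q (Suc n) (Suc k) = q_binom q n k + q ^ Suc k * q_binom q n (Suc k)"
proof -
  have "(1 - q ^ Suc k) * (q_binom q n k + q ^ Suc k * q_binom q n (Suc k))
      = (1 - q ^ Suc k) * q_binom q n k + q ^ Suc k * ((1 - q ^ Suc k) * q_binom q n (Suc k))"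
    by (simp add: algebra_simps)
  also have "\<dots> = (1 - q ^ Suc k * q ^ (n - k)) * q_binom q n k"
    unfolding q_binom_Suc_right[OF assms] by (simp add: algebra_simps)
  also have "\<dots> = (1 - q ^ Suc n) * q_binom q n k"
    by (cases "k \<le> n") (simp_all add: q_binom_eq_0 flip: power_add)
  also have "\<dots> = (1 - q ^ Suc k) * q_binom q (Suc n) (Suc k)"
    by (rule q_binom_Suc_Suc[OF assms, symmetric])
  finally show ?thesis
    using power_Suc_less_one[OF assms, of k] by simp
qed

lemma q_binom_pascal':
  assumes "0 < q" "q < 1"
  shows "q_binom q (Suc n) (Suc k) = q_binom q n (Suc k) + q ^ (n - k) * q_binom q n k"
  using q_binom_pascal[OF assms, of n k] q_binom_Suc_right[OF assms, where k = k and n = n]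
  by (simp add: left_diff_distrib)

definition q_pochhammer :: "real \<Rightarrow> nat \<Rightarrow> real" where
  "q_pochhammer q n = (\<Prod>i<n. 1 - q ^ (i + 1))"

lemma q_pochhammer_Suc: "q_pochhammer q (Suc n) = q_pochhammer q n * (1 - q ^ Suc n)"
  by (simp add: q_pochhammer_def)

lemma q_pochhammer_nonzero:
  assumes "0 < q" "q < 1"
  shows "q_pochhammer q n \<noteq> 0"
proof -
  have "q ^ (i + 1) \<noteq> 1" for i
    using power_Suc_less_one[OF assms, of i] by simp
  then show ?thesis
    by (simp add: q_pochhammer_def prod_zero_iff del: power_Suc)
qed

lemma q_pochhammer_split:
  "k \<le> n \<Longrightarrow> (\<Prod>i<k. 1 - q ^ (n - i)) * q_pochhammer q (n - k) = q_pochhammer q n"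
proof (induction k)
  case (Suc k)
  then have "n - k = Suc (n - Suc k)"
    by simp
  then have "q_pochhammer q (n - k) = q_pochhammer q (n - Suc k) * (1 - q ^ (n - k))"
    by (metis q_pochhammer_Suc)
  with Suc show ?case
    by (simp add: mult_ac)
qed simp

lemma q_binom_conv_q_pochhammer:
  assumes "0 < q" "q < 1" "k \<le> n"
  shows "q_binom q n k = q_pochhammer q n / (q_pochhammer q k * q_pochhammer q (n - k))"
  using q_pochhammer_split[OF assms(3), of q] q_pochhammer_nonzero[OF assms(1,2)]
  unfolding q_binom_def q_pochhammer_def[symmetric] by (simp add: field_simps)

lemma q_binom_self: "0 < q \<Longrightarrow> q < 1 \<Longrightarrow> q_binom q n n = 1"
  by (simp add: q_binom_conv_q_pochhammer q_pochhammer_nonzero) (simp add: q_pochhammer_def)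

lemma q_binom_symmetric:
  "0 < q \<Longrightarrow> q < 1 \<Longrightarrow> k \<le> n \<Longrightarrow> q_binom q n (n - k) = q_binom q n k"
  by (simp add: q_binom_conv_q_pochhammer mult.commute)

lemma q_binom_mult_q_binom:
  assumes "0 < q" "q < 1" "k \<le> m" "m \<le> n"
  shows "q_binom q n m * q_binom q m k = q_binom q n k * q_binom q (n - k) (m - k)"
proof -
  have "n - k - (m - k) = n - m"
    using assms by simp
  with assms show ?thesis
    by (simp add: q_binom_conv_q_pochhammer q_pochhammer_nonzero field_simps)
qed

lemma q_binomial_theorem:
  assumes "0 < q" "q < 1"
  shows "(\<Sum>j\<le>N. q_binom q N j * (-1) ^ j * q ^ (j choose 2) * x ^ j) = (\<Prod>i<N. 1 - q ^ i * x)"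
proof (induction N)
  case (Suc N)
  define t where "t N j = q_binom q N j * (-1) ^ j * q ^ (j choose 2) * x ^ j" for N j
  have t_Suc: "t (Suc N) (Suc j) = t N (Suc j) - q ^ N * x * t N j" if "j \<le> N" for j
  proof -
    have "N - j + (Suc j choose 2) = N + (j choose 2)"
      using that by (simp add: numeral_2_eq_2)
    then have "q ^ (N - j) * q ^ (Suc j choose 2) = q ^ N * q ^ (j choose 2)"
      by (metis power_add)
    then show ?thesis
      by (simp add: t_def q_binom_pascal'[OF assms] algebra_simps)
  qed
  have "t N (Suc N) = 0"
    by (simp add: t_def q_binom_eq_0)
  then have shift: "(\<Sum>j\<le>N. t N j) = t N 0 + (\<Sum>j\<le>N. t N (Suc j))"
    using sum.atMost_Suc_shift[of "t N" N] by simp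
  have "(\<Sum>j\<le>Suc N. t (Suc N) j) = t (Suc N) 0 + (\<Sum>j\<le>N. t (Suc N) (Suc j))"
    by (rule sum.atMost_Suc_shift)
  also have "\<dots> = t N 0 + (\<Sum>j\<le>N. t N (Suc j) - q ^ N * x * t N j)"
    by (simp add: t_Suc) (simp add: t_def)
  also have "\<dots> = (t N 0 + (\<Sum>j\<le>N. t N (Suc j))) - q ^ N * x * (\<Sum>j\<le>N. t N j)"
    by (simp add: sum_subtractf sum_distrib_left)
  also have "\<dots> = (1 - q ^ N * x) * (\<Sum>j\<le>N. t N j)"
    unfolding shift[symmetric] by (simp add: algebra_simps)
  finally have "(\<Sum>j\<le>Suc N. t (Suc N) j) = (1 - q ^ N * x) * (\<Sum>j\<le>N. t N j)" .
  with Suc show ?case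
    by (simp add: t_def)
qed (simp add: numeral_2_eq_2)

lemma sum_q_binom_alternating_eq_0:
  assumes "0 < q" "q < 1" "0 < N"
  shows "(\<Sum>j\<le>N. q_binom q N j * (-1) ^ j * q ^ (j choose 2)) = 0"
  using q_binomial_theorem[OF assms(1,2), of N 1] assms(3)
  by (auto simp: prod_zero_iff intro!: bexI[of _ 0])

lemma square_eq_plus_two_choose_two: "(i::nat)\<^sup>2 = i + 2 * (i choose 2)"
  by (induction i) (simp_all add: numeral_2_eq_2 power2_eq_square)

lemma sum_q_binom_sqrt_powers_eq_0:
  assumes "0 < q" "q < 1" "0 < N"
  shows "(\<Sum>j\<le>N. q_binom q N j * (- sqrt q) ^ j * sqrt q ^ ((N - j)\<^sup>2)) = 0"
proof -
  let ?s = "sqrt q"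
  have reflected_term: "q_binom q N (N - i) * (- ?s) ^ (N - i) * ?s ^ (i\<^sup>2)
      = (- ?s) ^ N * (q_binom q N i * (-1) ^ i * q ^ (i choose 2))" if "i \<le> N" for i
  proof -
    have "?s ^ (i\<^sup>2) = ?s ^ i * q ^ (i choose 2)"
      using assms(1) by (simp add: square_eq_plus_two_choose_two power_add power_mult)
    also have "\<dots> = (- ?s) ^ i * ((-1) ^ i * q ^ (i choose 2))"
      by (simp add: mult.assoc flip: power_mult_distrib)
    finally have "(- ?s) ^ (N - i) * ?s ^ (i\<^sup>2)
        = (- ?s) ^ (N - i) * (- ?s) ^ i * ((-1) ^ i * q ^ (i choose 2))"
      by (simp add: mult.assoc)
    also have "\<dots> = (- ?s) ^ N * ((-1) ^ i * q ^ (i choose 2))"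
      using that by (simp flip: power_add)
    finally show ?thesis
      using q_binom_symmetric[OF assms(1,2) that] by (simp add: mult_ac)
  qed
  have "(\<Sum>j\<le>N. q_binom q N j * (- ?s) ^ j * ?s ^ ((N - j)\<^sup>2))
      = (\<Sum>i\<le>N. q_binom q N (N - i) * (- ?s) ^ (N - i) * ?s ^ (i\<^sup>2))"
    using sum.atLeastAtMost_rev[of "\<lambda>j. q_binom q N j * (- ?s) ^ j * ?s ^ ((N - j)\<^sup>2)" 0 N]
    by (simp add: atLeast0AtMost)
  also have "\<dots> = (- ?s) ^ N * (\<Sum>i\<le>N. q_binom q N i * (-1) ^ i * q ^ (i choose 2))"
    by (simp add: reflected_term sum_distrib_left)
  also have "\<dots> = 0"
    by (simp add: sum_q_binom_alternating_eq_0[OF assms])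
  finally show ?thesis .
qed

lemma q_binom_inversion:
  assumes "0 < q" "q < 1"
  shows "(\<Sum>m\<le>n. q_binom q n m * sqrt q ^ ((n - m)\<^sup>2) * (q_binom q m k * (- sqrt q) ^ (m - k)))
    = (if n = k then 1 else 0)"
proof (cases "k \<le> n")
  case False
  then show ?thesis
    by (auto simp: q_binom_eq_0 intro!: sum.neutral)
next
  case True
  define N where "N = n - k"
  let ?f = "\<lambda>m. q_binom q n m * sqrt q ^ ((n - m)\<^sup>2) * (q_binom q m k * (- sqrt q) ^ (m - k))"
  have "(\<Sum>m\<le>n. ?f m) = (\<Sum>m\<in>{k..n}. ?f m)"
    by (rule sum.mono_neutral_right) (auto simp: q_binom_eq_0)
  also have "\<dots> = (\<Sum>j\<le>N. ?f (k + j))"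
    using sum.atLeastAtMost_shift_0[OF True, of ?f] by (simp add: N_def atLeast0AtMost comp_def)
  also have "\<dots> = q_binom q n k * (\<Sum>j\<le>N. q_binom q N j * (- sqrt q) ^ j * sqrt q ^ ((N - j)\<^sup>2))"
    unfolding sum_distrib_left
  proof (rule sum.cong)
    fix j assume "j \<in> {..N}"
    then have "q_binom q n (k + j) * q_binom q (k + j) k = q_binom q n k * q_binom q N j"
      using True q_binom_mult_q_binom[OF assms, of k "k + j" n] by (simp add: N_def)
    moreover have "n - (k + j) = N - j"
      by (simp add: N_def)
    ultimately show "?f (k + j)
        = q_binom q n k * (q_binom q N j * (- sqrt q) ^ j * sqrt q ^ ((N - j)\<^sup>2))"
      by (simp add: mult_ac)
  qed simp
  also have "\<dots> = (if n = k then 1 else 0)"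
    using True sum_q_binom_sqrt_powers_eq_0[OF assms, of N] by (auto simp: N_def q_binom_self[OF assms])
  finally show ?thesis .
qed

lemma coeff_reverse_poly:
  "coeff (reverse_poly n p) k = (if k \<le> n then cnj (coeff p (n - k)) else 0)"
  by (simp add: reverse_poly_def coeff_sum coeff_monom)

lemma powr_half_eq_sqrt_power: "0 < x \<Longrightarrow> x powr (real k / 2) = sqrt x ^ k"
  by (simp add: powr_half_sqrt[symmetric] powr_powr powr_realpow[symmetric])

lemma rs_alpha_conv_sqrt: "0 < q \<Longrightarrow> rs_alpha q n = - of_real ((- sqrt q) ^ Suc n)"
  using powr_half_eq_sqrt_power[of q "Suc n"] by (simp add: rs_alpha_def power_minus' add.commute)

lemma coeff_opuc_rs_alpha:
  assumes "0 < q" "q < 1"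
  shows "coeff (opuc (rs_alpha q) m) k = of_real (q_binom q m k * (- sqrt q) ^ (m - k))"
proof (induction m arbitrary: k)
  case 0
  show ?case
    by (cases k) (simp_all add: q_binom_eq_0)
next
  case (Suc m)
  let ?s = "- sqrt q"
  have rev: "coeff (reverse_poly m (opuc (rs_alpha q) m)) i
      = of_real (if i \<le> m then q_binom q m i * ?s ^ i else 0)" for i
    using q_binom_symmetric[OF assms, of i m] by (simp add: coeff_reverse_poly Suc.IH)
  have "coeff (opuc (rs_alpha q) (Suc m)) k = coeff (pCons 0 (opuc (rs_alpha q) m)) k
      + of_real (?s ^ Suc m) * coeff (reverse_poly m (opuc (rs_alpha q) m)) k"
    by (simp add: rs_alpha_conv_sqrt[OF assms(1)] del: power_Suc)
  also have "\<dots> = of_real (q_binom q (Suc m) k * ?s ^ (Suc m - k))"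
  proof (cases k)
    case 0
    then show ?thesis
      unfolding 0 rev by simp
  next
    case (Suc j)
    have "q_binom q m j * ?s ^ (m - j) + ?s ^ Suc m * (if k \<le> m then q_binom q m k * ?s ^ k else 0)
        = q_binom q (Suc m) k * ?s ^ (Suc m - k)"
    proof (cases "k \<le> m")
      case True
      then have "Suc m + k = 2 * k + (m - j)"
        using Suc by simp
      then have "?s ^ Suc m * ?s ^ k = ?s ^ (2 * k) * ?s ^ (m - j)"
        by (metis power_add)
      also have "?s ^ (2 * k) = q ^ k"
        using assms(1) by (simp add: power_mult)
      finally show ?thesis
        using True by (simp add: Suc q_binom_pascal[OF assms] algebra_simps del: power_Suc)
    next
      case False
      then show ?thesis
        by (simp add: Suc q_binom_pascal[OF assms] q_binom_eq_0 del: power_Suc)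
    qed
    then show ?thesis
      unfolding rev Suc coeff_pCons_Suc Suc.IH by (metis of_real_add of_real_mult)
  qed
  finally show ?case .
qed

lemma monom_conv_opuc_rs_alpha:
  assumes "0 < q" "q < 1"
  shows "monom 1 n
    = (\<Sum>j\<le>n. smult (of_real (q_binom q n j * sqrt q ^ ((n - j)\<^sup>2))) (opuc (rs_alpha q) j))"
    (is "_ = ?expansion")
proof (rule poly_eqI)
  fix k
  have "coeff ?expansion k = of_real (\<Sum>j\<le>n.
      q_binom q n j * sqrt q ^ ((n - j)\<^sup>2) * (q_binom q j k * (- sqrt q) ^ (j - k)))"
    by (simp add: coeff_sum coeff_opuc_rs_alpha[OF assms])
  also have "\<dots> = coeff (monom 1 n) k"
    by (simp add: q_binom_inversion[OF assms] coeff_monom)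
  finally show "coeff (monom 1 n) k = coeff ?expansion k"
    by simp
qed

lemma lp_inner_bounded_sum:
  assumes "degree f \<le> M" "degree g \<le> K"
  shows "lp_inner c f g = (\<Sum>i\<le>M. \<Sum>j\<le>K. coeff f i * cnj (coeff g j) * c (int i - int j))"
proof -
  have "lp_inner c f g = (\<Sum>i\<le>degree f. \<Sum>j\<le>K. coeff f i * cnj (coeff g j) * c (int i - int j))"
    unfolding lp_inner_def using assms(2)
    by (intro sum.cong refl sum.mono_neutral_left) (auto simp: coeff_eq_0)
  also have "\<dots> = (\<Sum>i\<le>M. \<Sum>j\<le>K. coeff f i * cnj (coeff g j) * c (int i - int j))"
    using assms(1) by (intro sum.mono_neutral_left) (auto simp: coeff_eq_0)
  finally show ?thesis .
qed

lemma lp_inner_add_right: "lp_inner c f (g + h) = lp_inner c f g + lp_inner c f h"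
proof -
  let ?K = "max (degree g) (degree h)"
  have "degree (g + h) \<le> ?K"
    by (rule degree_add_le) auto
  then show ?thesis
    by (simp add: lp_inner_bounded_sum[of f "degree f" _ ?K] distrib_left distrib_right sum.distrib)
qed

lemma lp_inner_smult_right: "lp_inner c f (smult a g) = cnj a * lp_inner c f g"
  by (simp add: lp_inner_bounded_sum[of f "degree f" _ "degree g"] sum_distrib_left mult_ac)

lemma lp_inner_0_right: "lp_inner c f 0 = 0"
  by (simp add: lp_inner_def)

lemma lp_inner_sum_right: "lp_inner c f (\<Sum>j\<in>A. g j) = (\<Sum>j\<in>A. lp_inner c f (g j))"
  by (induction A rule: infinite_finite_induct) (simp_all add: lp_inner_0_right lp_inner_add_right)

theorem proposition4p13:
  fixes q :: real and c :: "int \<Rightarrow> complex" and \<kappa> :: "nat \<Rightarrow> real"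
  assumes "0 < q" and "q < 1"
    and "c 0 = 1"
    and "\<And>n. \<kappa> n > 0"
    and "\<And>m n. lp_inner c (opuc (rs_alpha q) m) (opuc (rs_alpha q) n)
                   = (if m = n then complex_of_real (\<kappa> n) else 0)"
  shows "gen_moment c (rs_alpha q) n 0 m
           = complex_of_real (q_binom q n m * q powr ((real n - real m)^2 / 2))"
proof -
  let ?\<Phi> = "opuc (rs_alpha q)"
  define a where "a j = q_binom q n j * sqrt q ^ ((n - j)\<^sup>2)" for j
  have "lp_inner c (?\<Phi> m) (monom 1 n * ?\<Phi> 0)
      = (\<Sum>j\<le>n. of_real (a j) * lp_inner c (?\<Phi> m) (?\<Phi> j))"
    by (subst monom_conv_opuc_rs_alpha[OF assms(1,2)])
      (simp add: a_def lp_inner_sum_right lp_inner_smult_right)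
  also have "\<dots> = (\<Sum>j\<le>n. if j = m then of_real (a j * \<kappa> j) else 0)"
    by (intro sum.cong) (auto simp: assms(5))
  also have "\<dots> = of_real (a m * \<kappa> m)"
    by (cases "m \<le> n") (simp_all add: a_def q_binom_eq_0)
  finally have "gen_moment c (rs_alpha q) n 0 m = of_real (a m)"
    using assms(4)[of m] by (simp add: gen_moment_def assms(5))
  also have "a m = q_binom q n m * q powr ((real n - real m)\<^sup>2 / 2)"
  proof (cases "m \<le> n")
    case True
    then have "(real n - real m)\<^sup>2 = real ((n - m)\<^sup>2)"
      by (simp add: of_nat_diff)
    then show ?thesis
      using powr_half_eq_sqrt_power[OF assms(1), of "(n - m)\<^sup>2"] by (simp add: a_def)
  qed (simp add: a_def q_binom_eq_0)
  finally show ?thesis .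
qed

end
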